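(* Let $p(x,y)\in\mathbb{R}[x,y]$ be a real stable polynomial which is quadratic with respect to $x$. Suppose $(x_0,y_0)\in\mathbf{Ab}_p$ and $(x_0+\delta,y_0)\in\mathbf{Ab}_{q}$, where $q=(1-\frac12\partial_x^2)p$. Then: (i) if $\delta=1$, then $\Phi_q^y(x_0+\delta,y_0)\le\Phi_p^y(x_0,y_0)$; (ii) if $\delta\in(0,1)$ and $\Phi_p^x(x_0,y_0)\le\frac{\delta}{1-\delta^2}$, then $\Phi_q^y(x_0+\delta,y_0)\le\Phi_p^y(x_0,y_0)$.
   Context: A polynomial $p\in\mathbb{R}[z_1,\ldots,z_n]$ is real stable if $p(z_1,\ldots,z_n)\neq0$ whenever $\mathrm{Im}(z_i)>0$ for all $i$. A point $\mathbf{z}\in\mathbb{R}^n$ is above the roots of $p$ if $p(\mathbf{z}+\mathbf{t})>0$ for all $\mathbf{t}\in\mathbb{R}^n_{\ge0}$; $\mathbf{Ab}_p$ denotes the set of such points. For a real stable $p$ and $\mathbf{z}\in\mathbf{Ab}_p$, the barrier function of $p$ in direction $i$ is $\Phi_p^i(\mathbf{z})=\partial_{z_i}p(\mathbf{z})/p(\mathbf{z})$; for bivariate $p(x,y)$ the directions are written $x$ and $y$. *)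

theory Defs
  imports "HOL-Analysis.Analysis" "HOL-Computational_Algebra.Polynomial"
begin

text \<open>A bivariate real polynomial p(x,y) is represented as an element of (R[y])[x],
  i.e. a univariate polynomial in x whose coefficients are polynomials in y.
  The x-degree is the outer degree.\<close>

type_synonym bipoly = "real poly poly"

definition eval2 :: "bipoly \<Rightarrow> 'a::{real_algebra_1,comm_ring_1} \<Rightarrow> 'a \<Rightarrow> 'a" where
  "eval2 p x y = poly (map_poly (\<lambda>c. poly (map_poly of_real c) y) p) x"

definition real_stable2 :: "bipoly \<Rightarrow> bool" where
  "real_stable2 p \<longleftrightarrow>
     (\<forall>z w :: complex. Im z > 0 \<and> Im w > 0 \<longrightarrow> eval2 p z w \<noteq> 0)"

definition above_roots2 :: "bipoly \<Rightarrow> (real \<times> real) set" where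
  "above_roots2 p = {(x, y). \<forall>s t. s \<ge> 0 \<longrightarrow> t \<ge> 0 \<longrightarrow> eval2 p (x + s) (y + t) > (0::real)}"

definition dx :: "bipoly \<Rightarrow> bipoly" where
  "dx p = pderiv p"

definition dy :: "bipoly \<Rightarrow> bipoly" where
  "dy p = map_poly pderiv p"

definition barrier_x :: "bipoly \<Rightarrow> real \<Rightarrow> real \<Rightarrow> real" where
  "barrier_x p x y = eval2 (dx p) x y / eval2 p x y"

definition barrier_y :: "bipoly \<Rightarrow> real \<Rightarrow> real \<Rightarrow> real" where
  "barrier_y p x y = eval2 (dy p) x y / eval2 p x y"

end

theory Submission
  imports Defs "HOL-Real_Asymp.Real_Asymp"
begin

(* Along the line y = y0 write p(x0 + s, y0) = c + b s + a s^2 and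
   dp/dy(x0 + s, y0) = c1 + b1 s + a1 s^2; the heat step q = p - p_xx/2 just
   subtracts a resp. a1.  Real stability makes the Wronskian
   p_x p_y - p p_xy nonnegative on R^2: for real x and Im w > 0 the quadratic
   v |-> p(x + v, w) has no root in the upper half plane, which forces
   Im (p_x(x, w) * cnj (p(x, w))) <= 0, and differentiating in w at the real
   point w = y gives the claim.  After clearing denominators the barrier
   inequality for the shift delta becomes
   (1 - delta^2) (a c1 - a1 c) <= delta (b c1 - b1 c), which follows from the
   nonnegative quadratic Wronskian evaluated at s = -(1 - delta^2)/delta,
   using a >= 0 (p > 0 on the ray) and b (1 - delta^2) <= delta c. *)

lemma eval2_pCons:
  "eval2 (pCons c p) x y = poly (map_poly of_real c) y + x * eval2 p x y"
  unfolding eval2_def by (subst map_poly_pCons) auto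

lemma eval2_0 [simp]: "eval2 0 x y = 0"
  unfolding eval2_def by simp

lemma poly_map_poly_of_real_diff:
  "poly (map_poly of_real (p - q)) y = poly (map_poly of_real p) y - poly (map_poly of_real q) y"
  by (induction p q rule: poly_induct2) (simp_all add: map_poly_pCons right_diff_distrib)

lemma poly_map_poly_of_real:
  "poly (map_poly of_real p) (of_real y) = of_real (poly p y)"
  by (induction p) (simp_all add: map_poly_pCons)

lemma eval2_diff: "eval2 (p - q) x y = eval2 p x y - eval2 q x y"
  by (induction p q rule: poly_induct2)
    (simp_all add: eval2_pCons poly_map_poly_of_real_diff right_diff_distrib)

lemma eval2_smult_const: "eval2 (smult [:r:] p) x y = of_real r * eval2 p x y"
  by (induction p) (simp_all add: eval2_pCons map_poly_pCons map_poly_smult algebra_simps)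

lemma eval2_of_real:
  "eval2 p (of_real x) (of_real y) = of_real (eval2 p x y)"
  by (induction p) (simp_all add: eval2_pCons poly_map_poly_of_real)

lemma eval2_cnj: "eval2 p (cnj z) (cnj w) = cnj (eval2 p z w)"
  by (induction p) (simp_all add: eval2_pCons poly_cnj map_poly_map_poly o_def)

lemma pderiv_map_poly_of_real:
  "pderiv (map_poly of_real p) = map_poly of_real (pderiv p)"
  by (rule poly_eqI) (simp add: coeff_pderiv coeff_map_poly)

lemma eval2_has_field_derivative_y [derivative_intros]:
  fixes f :: "'a::real_normed_field \<Rightarrow> 'a"
  assumes "(f has_field_derivative f') (at t within S)"
  shows "((\<lambda>t. eval2 p x (f t)) has_field_derivative eval2 (dy p) x (f t) * f') (at t within S)"
proof -
  have "((\<lambda>w. eval2 p x w) has_field_derivative eval2 (dy p) x w) (at w)" for w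
  proof (induction p)
    case (pCons c p)
    show ?case unfolding dy_def
      by (auto intro!: derivative_eq_intros pCons.IH[unfolded dy_def]
          simp: eval2_pCons map_poly_pCons pderiv_map_poly_of_real)
  qed (simp add: dy_def)
  from DERIV_chain2[OF this assms] show ?thesis .
qed

lemma dy_diff: "dy (p - q) = dy p - dy q"
  unfolding dy_def by (rule poly_eqI) (simp add: coeff_map_poly pderiv_diff)

lemma dy_smult_const: "dy (smult [:r:] p) = smult [:r:] (dy p)"
  unfolding dy_def by (rule poly_eqI) (simp add: coeff_map_poly pderiv_smult)

lemma dx_dy_commute: "dx (dy p) = dy (dx p)"
  unfolding dx_def dy_def by (rule poly_eqI) (simp add: coeff_map_poly coeff_pderiv pderiv_mult flip: of_nat_Suc)

lemma degree_dy_le: "degree (dy p) \<le> degree p"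
  unfolding dy_def by (rule map_poly_degree_leq)

lemma degree_le_2_eq:
  assumes "degree p \<le> 2"
  shows "p = [:coeff p 0, coeff p 1, coeff p 2:]"
  using assms by (intro poly_eqI) (auto simp: coeff_pCons coeff_eq_0 numeral_2_eq_2 split: nat.split)

lemma eval2_quadratic_Taylor:
  fixes x s y :: "'a::real_field"
  assumes "degree p \<le> 2"
  shows "eval2 p (x + s) y = eval2 p x y + eval2 (dx p) x y * s + eval2 (dx (dx p)) x y * s\<^sup>2 / 2"
    and "eval2 (dx p) (x + s) y = eval2 (dx p) x y + eval2 (dx (dx p)) x y * s"
    and "eval2 (dx (dx p)) (x + s) y = eval2 (dx (dx p)) x y"
proof -
  obtain C B A where p: "p = [:C, B, A:]"
    using degree_le_2_eq[OF assms] by blast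
  have "dx p = [:B, smult 2 A:]" "dx (dx p) = [:smult 2 A:]"
    unfolding p dx_def by (simp_all add: pderiv_pCons numeral_mult_conv_smult)
  then show "eval2 p (x + s) y = eval2 p x y + eval2 (dx p) x y * s + eval2 (dx (dx p)) x y * s\<^sup>2 / 2"
    and "eval2 (dx p) (x + s) y = eval2 (dx p) x y + eval2 (dx (dx p)) x y * s"
    and "eval2 (dx (dx p)) (x + s) y = eval2 (dx (dx p)) x y"
    unfolding p by (simp_all add: eval2_pCons map_poly_smult algebra_simps power2_eq_square)
qed

lemma complex_quadratic_Vieta:
  fixes e f0 f1 :: complex
  assumes "e \<noteq> 0"
  obtains v1 v2 where "f1 = - e * (v1 + v2)" and "f0 = e * (v1 * v2)"
proof -
  define s where "s = csqrt (f1\<^sup>2 - 4 * e * f0)"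
  have "s * s = f1 * f1 - 4 * e * f0"
    unfolding s_def by (simp flip: power2_eq_square)
  then have "(- f1 + s) * (- f1 - s) = 4 * e * f0"
    by (simp add: algebra_simps)
  moreover have "e * ((- f1 + s) / (2 * e) * ((- f1 - s) / (2 * e))) = (- f1 + s) * (- f1 - s) / (4 * e)"
    using assms by (simp add: field_simps)
  ultimately have "f0 = e * ((- f1 + s) / (2 * e) * ((- f1 - s) / (2 * e)))"
    using assms by simp
  moreover have "f1 = - e * ((- f1 + s) / (2 * e) + (- f1 - s) / (2 * e))"
    using assms by (simp add: field_simps)
  ultimately show ?thesis
    by (rule that[rotated])
qed

lemma stable_quadratic_Im_le_0:
  fixes e f0 f1 :: complex
  assumes no_root: "\<And>v. 0 < Im v \<Longrightarrow> f0 + f1 * v + e * v\<^sup>2 \<noteq> 0"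
  shows "Im (f1 * cnj f0) \<le> 0"
proof (rule ccontr)
  assume "\<not> Im (f1 * cnj f0) \<le> 0"
  then have pos: "0 < Im f1 * Re f0 - Re f1 * Im f0"
    by simp
  then have "f0 \<noteq> 0" "f1 \<noteq> 0"
    by auto
  show False
  proof (cases "e = 0")
    case True
    have "0 < Im (- f0 / f1)"
      using pos \<open>f1 \<noteq> 0\<close> by (simp add: Im_divide algebra_simps divide_neg_pos complex_neq_0)
    moreover have "f0 + f1 * (- f0 / f1) + e * (- f0 / f1)\<^sup>2 = 0"
      using True \<open>f1 \<noteq> 0\<close> by simp
    ultimately show False
      using no_root by blast
  next
    case False
    obtain v1 v2 where f1: "f1 = - e * (v1 + v2)" and f0: "f0 = e * (v1 * v2)"
      using complex_quadratic_Vieta[OF False] .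
    have factor: "f0 + f1 * v + e * v\<^sup>2 = e * (v - v1) * (v - v2)" for v
      unfolding f0 f1 by (simp add: algebra_simps power2_eq_square)
    have "v1 \<noteq> 0" "v2 \<noteq> 0"
      using f0 \<open>f0 \<noteq> 0\<close> by auto
    then have "1 / v1 + 1 / v2 = - f1 / f0"
      unfolding f0 f1 using False by (simp add: field_simps)
    moreover have "Im (- f1 / f0) < 0"
      using pos \<open>f0 \<noteq> 0\<close> by (simp add: Im_divide algebra_simps divide_neg_pos complex_neq_0)
    ultimately have "Im (1 / v1) + Im (1 / v2) < 0"
      by (metis plus_complex.sel(2))
    then have "Im (1 / v1) < 0 \<or> Im (1 / v2) < 0"
      by linarith
    then have "0 < Im v1 \<or> 0 < Im v2"
      by (auto simp: Im_divide zero_less_divide_iff not_sum_power2_lt_zero)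
    then show False
      using no_root factor by fastforce
  qed
qed

lemma DERIV_nonpos_if_right_max:
  fixes f :: "real \<Rightarrow> real"
  assumes "(f has_real_derivative D) (at x)" and "\<And>h. 0 < h \<Longrightarrow> f (x + h) \<le> f x"
  shows "D \<le> 0"
  using DERIV_pos_inc_right[OF assms(1)] assms(2)
  by (meson dense not_le_imp_less order.strict_iff_not)

lemma real_stable2_wronskian_nonneg:
  fixes x y :: real
  assumes stable: "real_stable2 p" and deg: "degree p \<le> 2"
  shows "0 \<le> eval2 (dx p) x y * eval2 (dy p) x y - eval2 p x y * eval2 (dx (dy p)) x y"
proof -
  define X Y where "X = complex_of_real x" and "Y = complex_of_real y"
  define H where "H t = eval2 (dx p) X (Y + \<i> * t) * eval2 p X (Y - \<i> * t)" for t
  \<comment> \<open>For real \<open>t\<close> this is \<open>p\<^sub>x(x, y + i t) * cnj (p(x, y + i t))\<close>.\<close>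
  have H_upper: "Im (H (of_real t)) \<le> 0" if "0 < t" for t
  proof -
    define w where "w = Y + \<i> * of_real t"
    have "0 < Im w"
      using that by (simp add: w_def Y_def)
    have "Im (eval2 (dx p) X w * cnj (eval2 p X w)) \<le> 0"
    proof (rule stable_quadratic_Im_le_0)
      fix v :: complex
      assume "0 < Im v"
      then have "eval2 p (X + v) w \<noteq> 0"
        using stable \<open>0 < Im w\<close> by (simp add: real_stable2_def X_def)
      then show "eval2 p X w + eval2 (dx p) X w * v + eval2 (dx (dx p)) X w / 2 * v\<^sup>2 \<noteq> 0"
        by (simp add: eval2_quadratic_Taylor(1)[OF deg])
    qed
    moreover have "eval2 p X (Y - \<i> * of_real t) = cnj (eval2 p X w)"
      using eval2_cnj[of p X w] by (simp add: w_def X_def Y_def complex_eq_iff)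
    ultimately show ?thesis
      by (simp add: H_def w_def)
  qed
  have H_0: "Im (H 0) = 0"
    by (simp add: H_def X_def Y_def eval2_of_real flip: of_real_mult)
  define D where "D = eval2 (dy (dx p)) X Y * \<i> * eval2 p X Y - eval2 (dx p) X Y * (eval2 (dy p) X Y * \<i>)"
  have "(H has_field_derivative D) (at (of_real 0))"
    unfolding H_def D_def by (auto intro!: derivative_eq_intros simp: algebra_simps)
  then have "((\<lambda>t. Im (H (of_real t))) has_real_derivative Im D) (at 0)"
    by (rule has_field_derivative_Im[OF has_vector_derivative_real_field])
  moreover have "Im D = eval2 (dx (dy p)) x y * eval2 p x y - eval2 (dx p) x y * eval2 (dy p) x y"
    by (simp add: D_def X_def Y_def eval2_of_real dx_dy_commute flip: of_real_mult)
  ultimately have "((\<lambda>t. Im (H (of_real t))) has_real_derivative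
      eval2 (dx (dy p)) x y * eval2 p x y - eval2 (dx p) x y * eval2 (dy p) x y) (at 0)"
    by simp
  then have "eval2 (dx (dy p)) x y * eval2 p x y - eval2 (dx p) x y * eval2 (dy p) x y \<le> 0"
    by (rule DERIV_nonpos_if_right_max) (use H_upper H_0 in simp)
  then show ?thesis
    by (simp add: mult.commute)
qed

lemma quadratic_pos_on_ray_imp_nonneg:
  fixes a b c :: real
  assumes "\<And>s. 0 \<le> s \<Longrightarrow> 0 < c + b * s + a * s\<^sup>2"
  shows "0 \<le> a"
proof (rule ccontr)
  assume "\<not> 0 \<le> a"
  then have "filterlim (\<lambda>s. c + b * s + a * s\<^sup>2) at_bot at_top"
    by real_asymp
  then have "\<forall>\<^sub>F s in at_top. c + b * s + a * s\<^sup>2 < 0 \<and> 0 \<le> s"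
    by (intro eventually_conj) (auto simp: filterlim_at_bot_dense eventually_ge_at_top)
  then obtain s where "c + b * s + a * s\<^sup>2 < 0" and "0 \<le> s"
    by (auto simp: eventually_at_top_linorder)
  with assms show False
    by force
qed

lemma quadratic_wronskian_bound:
  fixes a b c a1 b1 c1 d :: real
  assumes "0 < c" and "0 \<le> a" and "0 < d" and "d \<le> 1" and "b * (1 - d\<^sup>2) \<le> d * c"
    and W: "\<And>s. 0 \<le> (b + 2 * a * s) * (c1 + b1 * s + a1 * s\<^sup>2) - (c + b * s + a * s\<^sup>2) * (b1 + 2 * a1 * s)"
  shows "c * (c1 + b1 * d + a1 * d\<^sup>2 - a1) \<le> c1 * (c + b * d + a * d\<^sup>2 - a)"
proof -
  define \<beta> \<gamma> \<kappa> where "\<beta> = a * b1 - a1 * b" and "\<gamma> = a * c1 - a1 * c" and "\<kappa> = b * c1 - b1 * c"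
  define e where "e = 1 - d\<^sup>2"
  have W_eq: "(b + 2 * a * s) * (c1 + b1 * s + a1 * s\<^sup>2) - (c + b * s + a * s\<^sup>2) * (b1 + 2 * a1 * s)
      = \<beta> * s\<^sup>2 + 2 * \<gamma> * s + \<kappa>" for s
    by (simp add: \<beta>_def \<gamma>_def \<kappa>_def algebra_simps power2_eq_square)
  have "0 \<le> \<kappa>"
    using W[of 0] by (simp add: \<kappa>_def algebra_simps)
  have "0 \<le> e"
    using \<open>0 < d\<close> \<open>d \<le> 1\<close> by (simp add: e_def power_le_one)
  \<comment> \<open>The claim expands to exactly this inequality.\<close>
  have "e * \<gamma> \<le> d * \<kappa>"
  proof (cases "\<gamma> \<le> 0")
    case True
    then show ?thesis
      using \<open>0 \<le> e\<close> \<open>0 \<le> \<kappa>\<close> \<open>0 < d\<close> by (meson mult_nonneg_nonneg mult_nonneg_nonpos order_trans less_imp_le)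
  next
    case False
    have "b * \<gamma> - c * \<beta> = a * \<kappa>"
      by (simp add: \<beta>_def \<gamma>_def \<kappa>_def algebra_simps)
    then have "c * \<beta> \<le> b * \<gamma>"
      using \<open>0 \<le> a\<close> \<open>0 \<le> \<kappa>\<close> by (metis diff_ge_0_iff_ge mult_nonneg_nonneg)
    then have "e * (c * \<beta>) \<le> e * (b * \<gamma>)"
      using \<open>0 \<le> e\<close> by (rule mult_left_mono)
    then have "c * (e * \<beta>) \<le> (b * e) * \<gamma>"
      by (simp add: ac_simps)
    also have "\<dots> \<le> (d * c) * \<gamma>"
      using False assms(5) by (simp add: e_def mult_right_mono)
    finally have "e * \<beta> \<le> d * \<gamma>"
      using \<open>0 < c\<close> by (simp add: algebra_simps)
    define t where "t = e / d"
    \<comment> \<open>The Wronskian at \<open>-t\<close> bounds \<open>\<kappa>\<close> from below.\<close>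
    have "0 \<le> t"
      using \<open>0 \<le> e\<close> \<open>0 < d\<close> by (simp add: t_def)
    have "\<beta> * t \<le> \<gamma>"
      using \<open>e * \<beta> \<le> d * \<gamma>\<close> \<open>0 < d\<close> by (simp add: t_def field_simps)
    then have "\<beta> * t\<^sup>2 \<le> \<gamma> * t"
      using \<open>0 \<le> t\<close> by (metis mult_right_mono mult.assoc power2_eq_square)
    moreover have "0 \<le> \<beta> * t\<^sup>2 - 2 * \<gamma> * t + \<kappa>"
      using W[of "- t"] unfolding W_eq by simp
    ultimately have "\<gamma> * t \<le> \<kappa>"
      by linarith
    then show ?thesis
      using \<open>0 < d\<close> by (simp add: t_def field_simps)
  qed
  then show ?thesis
    by (simp add: e_def \<gamma>_def \<kappa>_def algebra_simps power2_eq_square)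
qed

lemma barrier_y_heat_step_le:
  fixes p :: bipoly and x0 y0 \<delta> :: real
  defines "q \<equiv> p - smult [:1/2:] (dx (dx p))"
  assumes stable: "real_stable2 p" and deg: "degree p \<le> 2"
    and above: "(x0, y0) \<in> above_roots2 p"
    and q_pos: "0 < eval2 q (x0 + \<delta>) y0"
    and "0 < \<delta>" and "\<delta> \<le> 1" and barrier_x_le: "barrier_x p x0 y0 * (1 - \<delta>\<^sup>2) \<le> \<delta>"
  shows "barrier_y q (x0 + \<delta>) y0 \<le> barrier_y p x0 y0"
proof -
  define c b a where "c = eval2 p x0 y0" and "b = eval2 (dx p) x0 y0"
    and "a = eval2 (dx (dx p)) x0 y0 / 2"
  define c1 b1 a1 where "c1 = eval2 (dy p) x0 y0" and "b1 = eval2 (dx (dy p)) x0 y0"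
    and "a1 = eval2 (dx (dx (dy p))) x0 y0 / 2"
  have deg_dy: "degree (dy p) \<le> 2"
    using deg degree_dy_le order_trans by blast
  note Taylor = eval2_quadratic_Taylor[OF deg, of x0 _ y0]
  note Taylor_dy = eval2_quadratic_Taylor[OF deg_dy, of x0 _ y0]
  have P: "eval2 p (x0 + s) y0 = c + b * s + a * s\<^sup>2" for s
    by (simp add: Taylor a_def b_def c_def)
  have P_pos: "0 < c + b * s + a * s\<^sup>2" if "0 \<le> s" for s
  proof -
    have "0 < eval2 p (x0 + s) (y0 + 0)"
      using above that unfolding above_roots2_def by blast
    then show ?thesis
      by (simp add: P)
  qed
  then have "0 < c" and "0 \<le> a"
    using quadratic_pos_on_ray_imp_nonneg[OF P_pos] P_pos[of 0] by simp_all
  have W: "0 \<le> (b + 2 * a * s) * (c1 + b1 * s + a1 * s\<^sup>2) - (c + b * s + a * s\<^sup>2) * (b1 + 2 * a1 * s)" for s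
    using real_stable2_wronskian_nonneg[OF stable deg, of "x0 + s" y0]
    by (simp add: Taylor Taylor_dy a_def b_def c_def a1_def b1_def c1_def)
  have "b * (1 - \<delta>\<^sup>2) \<le> \<delta> * c"
    using barrier_x_le \<open>0 < c\<close> by (simp add: barrier_x_def b_def c_def field_simps)
  then have bound: "c * (c1 + b1 * \<delta> + a1 * \<delta>\<^sup>2 - a1) \<le> c1 * (c + b * \<delta> + a * \<delta>\<^sup>2 - a)"
    using quadratic_wronskian_bound[OF \<open>0 < c\<close> \<open>0 \<le> a\<close> \<open>0 < \<delta>\<close> \<open>\<delta> \<le> 1\<close> _ W] by blast
  have q_eval: "eval2 q (x0 + \<delta>) y0 = c + b * \<delta> + a * \<delta>\<^sup>2 - a"
    by (simp add: q_def eval2_diff eval2_smult_const P Taylor a_def)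
  have "dy q = dy p - smult [:1/2:] (dx (dx (dy p)))"
    by (simp add: q_def dy_diff dy_smult_const dx_dy_commute)
  then have dy_q_eval: "eval2 (dy q) (x0 + \<delta>) y0 = c1 + b1 * \<delta> + a1 * \<delta>\<^sup>2 - a1"
    by (simp add: eval2_diff eval2_smult_const Taylor_dy a1_def b1_def c1_def)
  show ?thesis
    using bound q_pos q_eval dy_q_eval \<open>0 < c\<close>
    by (simp add: barrier_y_def c_def c1_def divide_simps mult.commute)
qed

theorem lemma3p11:
  fixes p :: bipoly and x0 y0 \<delta> :: real
  assumes "real_stable2 p"
    and "degree p \<le> 2"
    and "(x0, y0) \<in> above_roots2 p"
    and "(x0 + \<delta>, y0) \<in> above_roots2 (p - smult [:1/2:] (dx (dx p)))"
  shows "(\<delta> = 1 \<longrightarrow>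
           barrier_y (p - smult [:1/2:] (dx (dx p))) (x0 + \<delta>) y0 \<le> barrier_y p x0 y0)
       \<and> (0 < \<delta> \<and> \<delta> < 1 \<and> barrier_x p x0 y0 \<le> \<delta> / (1 - \<delta>\<^sup>2) \<longrightarrow>
           barrier_y (p - smult [:1/2:] (dx (dx p))) (x0 + \<delta>) y0 \<le> barrier_y p x0 y0)"
proof -
  have q_pos: "0 < eval2 (p - smult [:1/2:] (dx (dx p))) (x0 + \<delta>) y0"
    using assms(4) by (auto simp: above_roots2_def dest!: spec[of _ 0])
  note heat_step = barrier_y_heat_step_le[OF assms(1-3) q_pos]
  show ?thesis
  proof (intro conjI impI)
    assume "\<delta> = 1"
    then show "barrier_y (p - smult [:1/2:] (dx (dx p))) (x0 + \<delta>) y0 \<le> barrier_y p x0 y0"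
      by (intro heat_step) simp_all
  next
    assume \<delta>: "0 < \<delta> \<and> \<delta> < 1 \<and> barrier_x p x0 y0 \<le> \<delta> / (1 - \<delta>\<^sup>2)"
    then have "0 < 1 - \<delta>\<^sup>2"
      by (simp add: power_less_one_iff abs_less_iff)
    then show "barrier_y (p - smult [:1/2:] (dx (dx p))) (x0 + \<delta>) y0 \<le> barrier_y p x0 y0"
      using \<delta> by (intro heat_step) (simp_all add: pos_le_divide_eq)
  qed
qed

end
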